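(* Let $\alpha>0$ and $T^{(1)}_\lambda(\alpha,\Delta t)=(1-\alpha\Delta t\lambda)^{-1}$. The explicit Euler time integration of $dy/dt=T^{(1)}_\lambda(\alpha,\Delta t)\lambda y$, namely $y^{n+1}=y^n+\Delta t\,T^{(1)}_\lambda(\alpha,\Delta t)\lambda y^n$, is unconditionally stable, i.e. $|y^n+\Delta t\,T^{(1)}_\lambda(\alpha,\Delta t)\lambda y^n|\leq|y^n|$ for all $\Delta t>0$, all $\lambda\in\mathbb{C}$ with $\mathrm{Re}(\lambda)\leq 0$ and all $y^n\in\mathbb{C}$, if and only if $\alpha\geq 0.5$. *)

theory Defs
  imports Complex_Main
begin

definition T1 :: "real \<Rightarrow> real \<Rightarrow> complex \<Rightarrow> complex" where
  "T1 a dt lam = inverse (1 - complex_of_real (a * dt) * lam)"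

end

theory Submission
  imports Defs
begin

text \<open>With \<open>z = \<Delta>t \<lambda>\<close>, one step multiplies \<open>y\<close> by the amplification factor
\<open>R(z) = 1 + z / (1 - \<alpha> z) = (1 + (1 - \<alpha>) z) / (1 - \<alpha> z)\<close>. Comparing squared moduli,
\<open>|R(z)| \<le> 1\<close> is equivalent to \<open>0 \<le> (2\<alpha> - 1) |z|\<^sup>2 - 2 Re z\<close>. For \<open>\<alpha> \<ge> 1/2\<close> and
\<open>Re z \<le> 0\<close> both terms are nonnegative; conversely \<open>z = \<i>\<close> forces \<open>2\<alpha> - 1 \<ge> 0\<close>.\<close>

lemma norm_multiplier_le_1_iff:
  fixes w :: "'a :: real_normed_div_algebra"
  shows "(\<forall>y. norm (y + w * y) \<le> norm y) \<longleftrightarrow> norm (1 + w) \<le> 1"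
proof
  assume "\<forall>y. norm (y + w * y) \<le> norm y"
  then show "norm (1 + w) \<le> 1" by (metis mult.right_neutral norm_one)
next
  assume w: "norm (1 + w) \<le> 1"
  show "\<forall>y. norm (y + w * y) \<le> norm y"
  proof
    fix y
    have "norm (y + w * y) = norm (1 + w) * norm y"
      by (metis distrib_right mult_1 norm_mult)
    also have "\<dots> \<le> norm y"
      using w by (simp add: mult_left_le_one_le)
    finally show "norm (y + w * y) \<le> norm y" .
  qed
qed

lemma one_minus_scaled_nonzero:
  fixes a :: real and z :: complex
  assumes "a \<ge> 0" and "Re z \<le> 0"
  shows "1 - of_real a * z \<noteq> 0"
proof -
  have "Re (1 - of_real a * z) \<ge> 1"
    using assms by (simp add: mult_nonneg_nonpos)
  then show ?thesis by (metis not_one_le_zero zero_complex.sel(1))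
qed

lemma norm_amplification_le_1_iff:
  fixes a :: real and z :: complex
  assumes "1 - of_real a * z \<noteq> 0"
  shows "cmod (1 + z / (1 - of_real a * z)) \<le> 1 \<longleftrightarrow> 0 \<le> (2 * a - 1) * (cmod z)\<^sup>2 - 2 * Re z"
proof -
  define v where "v = 1 - of_real a * z"
  have "1 + z / (1 - of_real a * z) = (v + z) / v"
    using assms by (simp add: v_def field_simps)
  then have "cmod (1 + z / (1 - of_real a * z)) \<le> 1 \<longleftrightarrow> (cmod (v + z))\<^sup>2 \<le> (cmod v)\<^sup>2"
    using assms by (simp add: v_def norm_divide divide_le_eq_1 power_mono_iff)
  also have "\<dots> \<longleftrightarrow> (Re v + Re z)\<^sup>2 + (Im v + Im z)\<^sup>2 \<le> (Re v)\<^sup>2 + (Im v)\<^sup>2"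
    by (simp add: cmod_power2)
  also have "\<dots> \<longleftrightarrow> 0 \<le> (2 * a - 1) * (cmod z)\<^sup>2 - 2 * Re z"
    unfolding cmod_power2 by (simp add: v_def power2_eq_square algebra_simps)
  finally show ?thesis .
qed

lemma dt_mult_T1_mult_eq:
  "complex_of_real dt * T1 a dt lam * lam = dt * lam / (1 - of_real a * (dt * lam))"
  by (simp add: T1_def divide_inverse mult_ac)

lemma euler_T1_stable_iff:
  fixes a dt :: real and lam :: complex
  assumes "a \<ge> 0" and "dt \<ge> 0" and "Re lam \<le> 0"
  shows "(\<forall>y. cmod (y + complex_of_real dt * T1 a dt lam * lam * y) \<le> cmod y)
    \<longleftrightarrow> 0 \<le> (2 * a - 1) * (cmod (dt * lam))\<^sup>2 - 2 * (dt * Re lam)"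
proof -
  define z where "z = complex_of_real dt * lam"
  have "Re z \<le> 0"
    using assms by (simp add: z_def mult_nonneg_nonpos)
  have "(\<forall>y. cmod (y + complex_of_real dt * T1 a dt lam * lam * y) \<le> cmod y)
      \<longleftrightarrow> cmod (1 + z / (1 - of_real a * z)) \<le> 1"
    by (simp only: dt_mult_T1_mult_eq norm_multiplier_le_1_iff z_def)
  also have "\<dots> \<longleftrightarrow> 0 \<le> (2 * a - 1) * (cmod z)\<^sup>2 - 2 * Re z"
    using assms \<open>Re z \<le> 0\<close>
    by (intro norm_amplification_le_1_iff one_minus_scaled_nonzero)
  finally show ?thesis
    by (simp add: z_def)
qed

theorem lemma1:
  fixes a :: real
  assumes "a > 0"
  shows "(\<forall>dt::real. dt > 0 \<longrightarrow> (\<forall>lam::complex. Re lam \<le> 0 \<longrightarrow>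
            (\<forall>y::complex. cmod (y + complex_of_real dt * T1 a dt lam * lam * y) \<le> cmod y)))
         \<longleftrightarrow> a \<ge> 1/2"
proof
  assume stable: "\<forall>dt>0. \<forall>lam. Re lam \<le> 0 \<longrightarrow>
    (\<forall>y. cmod (y + complex_of_real dt * T1 a dt lam * lam * y) \<le> cmod y)"
  have "0 \<le> (2 * a - 1) * (cmod (complex_of_real 1 * \<i>))\<^sup>2 - 2 * (1 * Re \<i>)"
    using stable euler_T1_stable_iff[of a 1 \<i>] assms by (simp del: of_real_1)
  then show "a \<ge> 1/2" by simp
next
  assume "a \<ge> 1/2"
  show "\<forall>dt>0. \<forall>lam. Re lam \<le> 0 \<longrightarrow>
    (\<forall>y. cmod (y + complex_of_real dt * T1 a dt lam * lam * y) \<le> cmod y)"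
  proof (intro allI impI)
    fix dt :: real and lam y :: complex
    assume dt: "dt > 0" and re: "Re lam \<le> 0"
    have "dt * Re lam \<le> 0"
      using dt re by (simp add: mult_nonneg_nonpos)
    moreover have "0 \<le> (2 * a - 1) * (cmod (complex_of_real dt * lam))\<^sup>2"
      using \<open>a \<ge> 1/2\<close> by simp
    ultimately have "\<forall>y. cmod (y + complex_of_real dt * T1 a dt lam * lam * y) \<le> cmod y"
      using assms dt re by (simp add: euler_T1_stable_iff)
    then show "cmod (y + complex_of_real dt * T1 a dt lam * lam * y) \<le> cmod y" ..
  qed
qed

end
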